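(* Let $\Gamma$ be a weighted digraph with vertex set $\{1,\dots,n\}$, $n>1$, without loops and with strictly positive arc weights, with Laplacian matrix $L$ and in-forest dimension $d$. For every $\lambda\neq0$, $$\operatorname{adj}(\lambda I+L)=\sum_{k=0}^{n-d}s'_{n-d-k}(\lambda)\,(-L/\lambda)^k,\qquad\text{where } s'_i(\lambda)=\sum_{j=0}^{i}\sigma_j\lambda^{n-j-1},\ i=0,\dots,n-d.$$
   Context: $W=(w_{ij})$ is the matrix of arc weights ($w_{ij}>0$ iff there is an arc $i\to j$, else $0$). The Laplacian $L=(\ell_{ij})$: $\ell_{ij}=-w_{ij}$ for $j\ne i$, $\ell_{ii}=\sum_{k\ne i}w_{ik}$. The weight of a subgraph is the product of its arc weights (1 if no arcs); the weight of a set of subgraphs is the sum of their weights. A converging tree is a weakly connected digraph with one vertex (the root) of outdegree 0 and all others of outdegree 1; an in-forest is a spanning subgraph of $\Gamma$ whose weak components are converging trees. The in-forest dimension $d$ is the minimal number of trees in an in-forest. $\sigma_k$ is the total weight of in-forests of $\Gamma$ with $k$ arcs. $\operatorname{adj}A$ is the transposed matrix of cofactors. *)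

theory Defs
  imports "Jordan_Normal_Form.Determinant"
begin

text \<open>Weighted digraphs on the vertex set {0..<n} (the paper's {1,...,n}, shifted by one).
  W i j is the weight of the arc i -> j; there is an arc iff W i j > 0.\<close>

definition arcs :: "nat \<Rightarrow> (nat \<Rightarrow> nat \<Rightarrow> real) \<Rightarrow> (nat \<times> nat) set" where
  "arcs n W = {(i,j). i < n \<and> j < n \<and> W i j > 0}"

definition laplacian :: "nat \<Rightarrow> (nat \<Rightarrow> nat \<Rightarrow> real) \<Rightarrow> real mat" where
  "laplacian n W = mat n n (\<lambda>(i,j). if i = j then (\<Sum>k\<in>{0..<n} - {i}. W i k) else - W i j)"

definition sg_weight :: "(nat \<Rightarrow> nat \<Rightarrow> real) \<Rightarrow> (nat \<times> nat) set \<Rightarrow> real" where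
  "sg_weight W F = (\<Prod>(i,j)\<in>F. W i j)"

definition weak_rel :: "nat set \<Rightarrow> (nat \<times> nat) set \<Rightarrow> (nat \<times> nat) set" where
  "weak_rel V F = (Id_on V \<union> F \<union> F\<inverse>)\<^sup>*"

definition outdeg :: "(nat \<times> nat) set \<Rightarrow> nat \<Rightarrow> nat" where
  "outdeg F v = card {w. (v, w) \<in> F}"

definition converging_tree :: "nat set \<Rightarrow> (nat \<times> nat) set \<Rightarrow> bool" where
  "converging_tree V F \<longleftrightarrow> V \<noteq> {} \<and> F \<subseteq> V \<times> V \<and>
     (\<forall>u\<in>V. \<forall>v\<in>V. (u, v) \<in> weak_rel V F) \<and>
     (\<exists>!r. r \<in> V \<and> outdeg F r = 0) \<and>
     (\<forall>v\<in>V. outdeg F v = 0 \<or> outdeg F v = 1)"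

definition weak_components :: "nat \<Rightarrow> (nat \<times> nat) set \<Rightarrow> nat set set" where
  "weak_components n F = {0..<n} // weak_rel {0..<n} F"

definition in_forest :: "nat \<Rightarrow> (nat \<Rightarrow> nat \<Rightarrow> real) \<Rightarrow> (nat \<times> nat) set \<Rightarrow> bool" where
  "in_forest n W F \<longleftrightarrow> F \<subseteq> arcs n W \<and>
     (\<forall>C\<in>weak_components n F. converging_tree C (F \<inter> (C \<times> C)))"

definition in_forest_dim :: "nat \<Rightarrow> (nat \<Rightarrow> nat \<Rightarrow> real) \<Rightarrow> nat" where
  "in_forest_dim n W = Min {card (weak_components n F) | F. in_forest n W F}"

definition sigma :: "nat \<Rightarrow> (nat \<Rightarrow> nat \<Rightarrow> real) \<Rightarrow> nat \<Rightarrow> real" where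
  "sigma n W k = (\<Sum>F\<in>{F. in_forest n W F \<and> card F = k}. sg_weight W F)"

definition s_prime :: "nat \<Rightarrow> (nat \<Rightarrow> nat \<Rightarrow> real) \<Rightarrow> nat \<Rightarrow> real \<Rightarrow> real" where
  "s_prime n W i lam = (\<Sum>j = 0..i. sigma n W j * lam powi (int n - int j - 1))"

end

theory Submission
  imports Defs
begin

(* Write each row of lam I + L as lam e_v + sum_w W v w (e_v - e_w) and expand the determinant
  multilinearly: det (lam I + L) becomes a sum over maps c that send every vertex v to v or to
  an out-neighbour, weighted by lam^#(fixed points of c) times the arc weights used, times the
  determinant of the matrix with rows e_v - e_(c v). That determinant is 1 if c has no cycles
  other than fixed points and 0 otherwise, and such maps with positive weights are exactly the
  in-forests, with the fixed points as roots. Hence det (lam I + L) = sum_k sigma_k lam^(n-k).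
  An entry of adj (lam I + L) is the determinant of a matrix of the same shape, so it is
  sum_k Q_k lam^(n-1-k), and again Q_k vanishes for k > n - d. Comparing coefficients in
  adj(A) A = det(A) I gives Q_k + Q_(k-1) L = sigma_k I, so Q_k = sum_j sigma_j (-L)^(k-j);
  regrouping by powers of -L/lam yields the formula. *)

section \<open>Maps of the vertex set and their functional digraphs\<close>

definition moved :: "nat \<Rightarrow> (nat \<Rightarrow> nat) \<Rightarrow> nat set" where
  "moved n c = {v. v < n \<and> c v \<noteq> v}"

definition fixed_vertices :: "nat \<Rightarrow> (nat \<Rightarrow> nat) \<Rightarrow> nat set" where
  "fixed_vertices n c = {v. v < n \<and> c v = v}"

definition reaches_fixpoint :: "(nat \<Rightarrow> nat) \<Rightarrow> nat \<Rightarrow> bool" where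
  "reaches_fixpoint c v \<longleftrightarrow> (\<exists>k. c ((c ^^ k) v) = (c ^^ k) v)"

definition acyclic_fun :: "nat \<Rightarrow> (nat \<Rightarrow> nat) \<Rightarrow> bool" where
  "acyclic_fun n c \<longleftrightarrow> (\<forall>v<n. reaches_fixpoint c v)"

definition acyclic_funs :: "nat \<Rightarrow> (nat \<Rightarrow> nat) set" where
  "acyclic_funs n = {c \<in> {0..<n} \<rightarrow>\<^sub>E {0..<n}. acyclic_fun n c}"

definition fun_arcs :: "nat \<Rightarrow> (nat \<Rightarrow> nat) \<Rightarrow> (nat \<times> nat) set" where
  "fun_arcs n c = (\<lambda>v. (v, c v)) ` moved n c"

definition forest_fun :: "nat \<Rightarrow> (nat \<Rightarrow> nat \<Rightarrow> real) \<Rightarrow> (nat \<Rightarrow> nat) \<Rightarrow> bool" where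
  "forest_fun n W c \<longleftrightarrow>
     c \<in> {0..<n} \<rightarrow>\<^sub>E {0..<n} \<and> acyclic_fun n c \<and> (\<forall>v\<in>moved n c. W v (c v) > 0)"

lemma card_fixed_vertices_moved: "card (fixed_vertices n c) + card (moved n c) = n"
proof -
  have "fixed_vertices n c \<union> moved n c = {..<n}" "fixed_vertices n c \<inter> moved n c = {}"
    by (auto simp: fixed_vertices_def moved_def)
  then show ?thesis
    by (metis card_Un_disjoint card_lessThan finite_Un finite_lessThan)
qed

lemma card_fixed_vertices_moved_remove:
  assumes "b < n"
  shows "card (fixed_vertices n c - {b}) + card (moved n c - {b}) = n - 1"
proof -
  have "(fixed_vertices n c - {b}) \<union> (moved n c - {b}) = {..<n} - {b}"
    "(fixed_vertices n c - {b}) \<inter> (moved n c - {b}) = {}"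
    by (auto simp: fixed_vertices_def moved_def)
  then have "card (fixed_vertices n c - {b}) + card (moved n c - {b}) = card ({..<n} - {b})"
    by (metis card_Un_disjoint finite_Diff finite_Un finite_lessThan)
  then show ?thesis using assms by simp
qed

lemma finite_moved [simp]: "finite (moved n c)"
  unfolding moved_def by simp

lemma finite_acyclic_funs [simp]: "finite (acyclic_funs n)"
  unfolding acyclic_funs_def by (simp add: finite_PiE)

lemma fun_arcs_iff: "(v, w) \<in> fun_arcs n c \<longleftrightarrow> v < n \<and> c v \<noteq> v \<and> w = c v"
  unfolding fun_arcs_def moved_def by auto

lemma fun_arcs_subset:
  "c \<in> {0..<n} \<rightarrow>\<^sub>E {0..<n} \<Longrightarrow> fun_arcs n c \<subseteq> {0..<n} \<times> {0..<n}"
  by (auto simp: fun_arcs_iff)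

lemma card_fun_arcs: "card (fun_arcs n c) = card (moved n c)"
  unfolding fun_arcs_def by (rule card_image) (auto intro: inj_onI)

lemma sg_weight_fun_arcs: "sg_weight W (fun_arcs n c) = (\<Prod>v\<in>moved n c. W v (c v))"
  unfolding sg_weight_def fun_arcs_def by (subst prod.reindex) (auto intro: inj_onI)

lemma inj_on_fun_arcs: "inj_on (fun_arcs n) ({0..<n} \<rightarrow>\<^sub>E {0..<n})"
proof (rule inj_onI)
  fix c d assume c: "c \<in> {0..<n} \<rightarrow>\<^sub>E {0..<n}" and d: "d \<in> {0..<n} \<rightarrow>\<^sub>E {0..<n}"
    and eq: "fun_arcs n c = fun_arcs n d"
  have "c v = d v" for v
  proof (cases "v < n")
    case True
    then show ?thesis
      using eq fun_arcs_iff[of v "c v" n c] fun_arcs_iff[of v "d v" n d]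
        fun_arcs_iff[of v "c v" n d] fun_arcs_iff[of v "d v" n c] by metis
  qed (use c d in \<open>auto simp: PiE_def extensional_def\<close>)
  then show "c = d" by blast
qed

lemma funpow_fixpoint: "c r = r \<Longrightarrow> (c ^^ k) r = r"
  by (induction k) auto

lemma funpow_PiE_range:
  fixes c :: "nat \<Rightarrow> nat"
  assumes "c \<in> {0..<n} \<rightarrow>\<^sub>E {0..<n}" "v < n"
  shows "(c ^^ k) v < n"
  using assms(2)
proof (induction k)
  case (Suc k)
  then show ?case using PiE_mem[OF assms(1), of "(c ^^ k) v"] by simp
qed simp

lemma reaches_fixpoint_apply: "reaches_fixpoint c (c v) \<longleftrightarrow> reaches_fixpoint c v"
proof
  assume "reaches_fixpoint c (c v)"
  then obtain k where "c ((c ^^ k) (c v)) = (c ^^ k) (c v)" unfolding reaches_fixpoint_def by blast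
  then have "c ((c ^^ Suc k) v) = (c ^^ Suc k) v" by (simp add: funpow_Suc_right del: funpow.simps)
  then show "reaches_fixpoint c v" unfolding reaches_fixpoint_def by blast
next
  assume "reaches_fixpoint c v"
  then obtain k where k: "c ((c ^^ k) v) = (c ^^ k) v" unfolding reaches_fixpoint_def by blast
  show "reaches_fixpoint c (c v)"
  proof (cases k)
    case 0
    then show ?thesis using k unfolding reaches_fixpoint_def by (metis funpow_0)
  next
    case (Suc k')
    then have "c ((c ^^ k') (c v)) = (c ^^ k') (c v)"
      using k by (simp add: funpow_Suc_right del: funpow.simps)
    then show ?thesis unfolding reaches_fixpoint_def by blast
  qed
qed

lemma acyclic_fun_update_fixpoint:
  assumes "acyclic_fun n c"
  shows "acyclic_fun n (c(j := j))"
proof -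
  have "reaches_fixpoint (c(j := j)) v" if "c ((c ^^ k) v) = (c ^^ k) v" for k v
    using that
  proof (induction k arbitrary: v)
    case 0
    then show ?case unfolding reaches_fixpoint_def by (intro exI[of _ 0]) auto
  next
    case (Suc k)
    show ?case
    proof (cases "v = j")
      case True
      then show ?thesis unfolding reaches_fixpoint_def by (intro exI[of _ 0]) simp
    next
      case False
      have "c ((c ^^ k) (c v)) = (c ^^ k) (c v)"
        using Suc.prems by (simp add: funpow_Suc_right del: funpow.simps)
      then have "reaches_fixpoint (c(j := j)) (c v)" by (rule Suc.IH)
      moreover have "(c(j := j)) v = c v" using False by simp
      ultimately show ?thesis using reaches_fixpoint_apply[of "c(j := j)" v] by metis
    qed
  qed
  then show ?thesis using assms unfolding acyclic_fun_def reaches_fixpoint_def[of c] by blast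
qed

lemma moved_fun_upd_self: "moved n (c(b := b)) = moved n c - {b}"
  unfolding moved_def by auto

lemma acyclic_funs_fun_upd_self:
  assumes "c \<in> acyclic_funs n" "b < n"
  shows "c(b := b) \<in> acyclic_funs n"
proof -
  have "c(b := b) \<in> insert b {0..<n} \<rightarrow>\<^sub>E {0..<n}"
    using assms PiE_fun_upd[of b "\<lambda>_. {0..<n}" b c "{0..<n}"] unfolding acyclic_funs_def by simp
  then show ?thesis
    using assms acyclic_fun_update_fixpoint unfolding acyclic_funs_def by (simp add: insert_absorb)
qed

lemma acyclic_fun_depth:
  assumes "acyclic_fun n c"
  obtains depth :: "nat \<Rightarrow> nat" where "\<And>v. v < n \<Longrightarrow> c v \<noteq> v \<Longrightarrow> depth (c v) < depth v"
proof -
  define depth where "depth v = (LEAST k. c ((c ^^ k) v) = (c ^^ k) v)" for v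
  have "depth (c v) < depth v" if v: "v < n" and cv: "c v \<noteq> v" for v
  proof -
    have fixed: "c ((c ^^ depth v) v) = (c ^^ depth v) v"
      using assms v unfolding acyclic_fun_def reaches_fixpoint_def depth_def by (meson LeastI_ex)
    then obtain k where k: "depth v = Suc k"
      using cv by (cases "depth v") auto
    have "c ((c ^^ k) (c v)) = (c ^^ k) (c v)"
      using fixed k by (simp add: funpow_Suc_right del: funpow.simps)
    then have "depth (c v) \<le> k" unfolding depth_def by (rule Least_le)
    then show ?thesis using k by simp
  qed
  then show ?thesis using that by blast
qed

lemma permutes_along_acyclic_fun_eq_id:
  assumes acyclic: "acyclic_fun n c" and p: "p permutes {0..<n}"
    and along: "\<And>i. i < n \<Longrightarrow> p i = i \<or> (c i \<noteq> i \<and> p i = c i)"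
  shows "p = id"
proof (rule ccontr)
  assume "p \<noteq> id"
  then obtain j where j: "p j \<noteq> j" by (auto simp: fun_eq_iff)
  then have "j < n" using p unfolding permutes_def by auto
  obtain depth :: "nat \<Rightarrow> nat" where depth: "\<And>v. v < n \<Longrightarrow> c v \<noteq> v \<Longrightarrow> depth (c v) < depth v"
    using acyclic_fun_depth[OF acyclic] by blast
  have "(\<Sum>i\<in>{0..<n}. depth (p i)) < (\<Sum>i\<in>{0..<n}. depth i)"
  proof (rule sum_strict_mono_ex1)
    show "\<forall>i\<in>{0..<n}. depth (p i) \<le> depth i"
      using along depth by (metis atLeastLessThan_iff less_imp_le order_refl)
    show "\<exists>i\<in>{0..<n}. depth (p i) < depth i"
      using along[OF \<open>j < n\<close>] depth[OF \<open>j < n\<close>] j \<open>j < n\<close>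
      by (intro bexI[of _ j]) auto
  qed simp
  moreover have "(\<Sum>i\<in>{0..<n}. depth (p i)) = (\<Sum>i\<in>{0..<n}. depth i)"
    using sum.permute[OF p, of depth] by (simp add: comp_def)
  ultimately show False by simp
qed

lemma weak_rel_refl [simp]: "(v, v) \<in> weak_rel V F"
  unfolding weak_rel_def by simp

lemma weak_rel_arc: "(v, w) \<in> F \<Longrightarrow> (v, w) \<in> weak_rel V F"
  unfolding weak_rel_def by auto

lemma weak_rel_sym: "(v, w) \<in> weak_rel V F \<Longrightarrow> (w, v) \<in> weak_rel V F"
proof -
  have "sym (Id_on V \<union> F \<union> F\<inverse>)" by (auto simp: sym_def)
  then show "(v, w) \<in> weak_rel V F \<Longrightarrow> (w, v) \<in> weak_rel V F"
    unfolding weak_rel_def by (metis sym_rtrancl symD)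
qed

lemma weak_rel_trans:
  "(u, v) \<in> weak_rel V F \<Longrightarrow> (v, w) \<in> weak_rel V F \<Longrightarrow> (u, w) \<in> weak_rel V F"
  unfolding weak_rel_def by (rule rtrancl_trans)

lemma weak_rel_closed:
  assumes "F \<subseteq> V \<times> V" "(v, w) \<in> weak_rel V F" "v \<in> V"
  shows "w \<in> V"
  using assms(2,3) unfolding weak_rel_def
  by (induction rule: rtrancl_induct) (use assms(1) in auto)

lemma weak_rel_within_class:
  fixes V F x
  defines "C \<equiv> weak_rel V F `` {x}"
  assumes "(x, u) \<in> weak_rel V F" "(u, z) \<in> weak_rel V F"
  shows "(u, z) \<in> weak_rel C (F \<inter> C \<times> C)"
  using assms(3) unfolding weak_rel_def[of V F]
proof (induction rule: rtrancl_induct)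
  case base
  then show ?case by simp
next
  case (step y z)
  have "(y, z) \<in> weak_rel V F"
    using step.hyps(2) by (auto intro: weak_rel_arc weak_rel_sym)
  moreover have "(x, y) \<in> weak_rel V F"
    using assms(2) step.hyps(1) weak_rel_trans unfolding weak_rel_def by blast
  ultimately have "y \<in> C" "z \<in> C"
    unfolding C_def using weak_rel_trans by blast+
  then have "(y, z) \<in> weak_rel C (F \<inter> C \<times> C)"
    using step.hyps(2) by (auto intro: weak_rel_arc weak_rel_sym)
  then show ?case using step.IH weak_rel_trans by blast
qed

lemma weak_rel_reaches_fixpoint:
  assumes F: "\<And>x y. (x, y) \<in> F \<Longrightarrow> y = c x"
    and r: "c r = r" and rz: "(r, z) \<in> weak_rel V F"
  shows "\<exists>k. (c ^^ k) z = r"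
  using rz unfolding weak_rel_def
proof (induction rule: rtrancl_induct)
  case base
  then show ?case by (intro exI[of _ 0]) simp
next
  case (step y z)
  then obtain k where k: "(c ^^ k) y = r" by blast
  from step.hyps(2) consider "z = y" | "z = c y" | "y = c z"
    using F by blast
  then show ?case
  proof cases
    case 1
    then show ?thesis using k by blast
  next
    case 2
    show ?thesis
    proof (cases k)
      case 0
      then show ?thesis using k r 2 by (intro exI[of _ 0]) simp
    next
      case (Suc k')
      then show ?thesis
        using k 2 by (intro exI[of _ k']) (simp add: funpow_Suc_right del: funpow.simps)
    qed
  next
    case 3
    then show ?thesis
      using k by (intro exI[of _ "Suc k"]) (simp add: funpow_Suc_right del: funpow.simps)
  qed
qed

lemma weak_rel_funpow:
  assumes c: "c \<in> {0..<n} \<rightarrow>\<^sub>E {0..<n}" and v: "v < n"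
  shows "(v, (c ^^ k) v) \<in> weak_rel {0..<n} (fun_arcs n c)"
proof (induction k)
  case 0
  then show ?case by simp
next
  case (Suc k)
  have "(c ^^ k) v < n" using funpow_PiE_range[OF c v] .
  then have "((c ^^ k) v, c ((c ^^ k) v)) \<in> weak_rel {0..<n} (fun_arcs n c)"
    by (cases "c ((c ^^ k) v) = (c ^^ k) v") (auto intro: weak_rel_arc simp: fun_arcs_iff)
  then show ?case using Suc.IH weak_rel_trans by fastforce
qed

lemma weak_rel_fixpoints_eq:
  assumes "c r = r" "c r' = r'" "(r, r') \<in> weak_rel V (fun_arcs n c)"
  shows "r = r'"
proof -
  obtain k where "(c ^^ k) r' = r"
    using weak_rel_reaches_fixpoint[where F = "fun_arcs n c" and z = r' and V = V] assms(1,3)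
    by (auto simp: fun_arcs_iff)
  then show ?thesis using funpow_fixpoint[of c r' k] assms(2) by simp
qed

lemma weak_rel_fixpoint_exists:
  assumes c: "c \<in> {0..<n} \<rightarrow>\<^sub>E {0..<n}" and "acyclic_fun n c" "v < n"
  shows "\<exists>r\<in>fixed_vertices n c. (v, r) \<in> weak_rel {0..<n} (fun_arcs n c)"
proof -
  obtain k where "c ((c ^^ k) v) = (c ^^ k) v"
    using assms(2,3) unfolding acyclic_fun_def reaches_fixpoint_def by blast
  then show ?thesis
    using funpow_PiE_range[OF c \<open>v < n\<close>] weak_rel_funpow[OF c \<open>v < n\<close>]
    unfolding fixed_vertices_def by blast
qed

section \<open>In-forests as acyclic maps\<close>

definition arc_fun :: "nat \<Rightarrow> (nat \<times> nat) set \<Rightarrow> nat \<Rightarrow> nat" where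
  "arc_fun n F = restrict (\<lambda>v. if \<exists>w. (v, w) \<in> F then THE w. (v, w) \<in> F else v) {0..<n}"

lemma in_forest_subset:
  assumes "in_forest n W F"
  shows "F \<subseteq> {0..<n} \<times> {0..<n}"
proof -
  have "F \<subseteq> arcs n W" using assms unfolding in_forest_def by blast
  then show ?thesis unfolding arcs_def by auto
qed

lemma in_forest_arc:
  assumes "in_forest n W F" "\<forall>i<n. W i i = 0" "(v, w) \<in> F"
  shows "v < n" "w < n" "v \<noteq> w" "W v w > 0"
proof -
  have "(v, w) \<in> arcs n W" using assms(1,3) unfolding in_forest_def by blast
  then show "v < n" "w < n" "v \<noteq> w" "W v w > 0"
    using assms(2) unfolding arcs_def by auto
qed

lemma in_forest_component:
  assumes "in_forest n W F" "v < n"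
  shows "converging_tree (weak_rel {0..<n} F `` {v})
           (F \<inter> (weak_rel {0..<n} F `` {v}) \<times> (weak_rel {0..<n} F `` {v}))"
proof -
  have "weak_rel {0..<n} F `` {v} \<in> weak_components n F"
    unfolding weak_components_def using assms(2) by (intro quotientI) simp
  then show ?thesis using assms(1) unfolding in_forest_def by blast
qed

lemma in_forest_out_arc_unique:
  assumes F: "in_forest n W F" "\<forall>i<n. W i i = 0"
    and vw: "(v, w) \<in> F" "(v, w') \<in> F"
  shows "w = w'"
proof -
  define C where "C = weak_rel {0..<n} F `` {v}"
  let ?S = "{u. (v, u) \<in> F \<inter> C \<times> C}"
  have "converging_tree C (F \<inter> C \<times> C)"
    unfolding C_def by (rule in_forest_component[OF F(1) in_forest_arc(1)[OF F vw(1)]])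
  moreover have "v \<in> C" unfolding C_def by simp
  ultimately have "outdeg (F \<inter> C \<times> C) v = 0 \<or> outdeg (F \<inter> C \<times> C) v = 1"
    unfolding converging_tree_def by blast
  then have "card ?S \<le> Suc 0" unfolding outdeg_def by linarith
  moreover have "?S \<subseteq> {0..<n}"
    using in_forest_arc(2)[OF F, of v] by auto
  then have "finite ?S" by (rule finite_subset) simp
  moreover have "w \<in> ?S" "w' \<in> ?S"
    using vw \<open>v \<in> C\<close> unfolding C_def by (simp_all add: weak_rel_arc)
  ultimately show ?thesis using card_le_Suc0_iff_eq by blast
qed

lemma arc_fun_arc:
  assumes unique: "\<And>w'. (v, w') \<in> F \<Longrightarrow> w' = w" and "(v, w) \<in> F" "v < n"
  shows "arc_fun n F v = w"
proof -
  have "(THE w. (v, w) \<in> F) = w" using the_equality[of "\<lambda>w. (v, w) \<in> F", OF assms(2) unique] .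
  then show ?thesis unfolding arc_fun_def using assms(2,3) by auto
qed

lemma arc_fun_no_arc:
  assumes "\<nexists>w. (v, w) \<in> F" "v < n"
  shows "arc_fun n F v = v"
  unfolding arc_fun_def using assms by auto

lemma in_forest_arc_iff:
  assumes F: "in_forest n W F" and noloop: "\<forall>i<n. W i i = 0"
  shows "(v, w) \<in> F \<longleftrightarrow> v < n \<and> arc_fun n F v \<noteq> v \<and> w = arc_fun n F v"
proof
  assume vw: "(v, w) \<in> F"
  then have "arc_fun n F v = w"
    using in_forest_out_arc_unique[OF F noloop vw]
    by (intro arc_fun_arc[OF _ vw in_forest_arc(1)[OF F noloop vw]]) auto
  then show "v < n \<and> arc_fun n F v \<noteq> v \<and> w = arc_fun n F v"
    using in_forest_arc(1,3)[OF F noloop vw] by simp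
next
  assume v: "v < n \<and> arc_fun n F v \<noteq> v \<and> w = arc_fun n F v"
  then obtain w' where vw': "(v, w') \<in> F" using arc_fun_no_arc[of v F n] by blast
  then have "arc_fun n F v = w'"
    using in_forest_out_arc_unique[OF F noloop vw']
    by (intro arc_fun_arc[OF _ vw' in_forest_arc(1)[OF F noloop vw']]) auto
  then show "(v, w) \<in> F" using vw' v by simp
qed

lemma in_forest_root:
  fixes F :: "(nat \<times> nat) set" and v n :: nat
  defines "C \<equiv> weak_rel {0..<n} F `` {v}"
  assumes F: "in_forest n W F" and v: "v < n"
  shows "\<exists>r<n. (\<forall>w. (r, w) \<notin> F) \<and> (r, v) \<in> weak_rel C (F \<inter> C \<times> C)"
proof -
  have tree: "converging_tree C (F \<inter> C \<times> C)"
    unfolding C_def by (rule in_forest_component[OF F v])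
  then obtain r where r: "r \<in> C" "outdeg (F \<inter> C \<times> C) r = 0"
    unfolding converging_tree_def by auto
  have "v \<in> C" unfolding C_def by simp
  have "(v, r) \<in> weak_rel {0..<n} F" using r(1) unfolding C_def by simp
  then have "r < n" using v weak_rel_closed[OF in_forest_subset[OF F]] by fastforce
  moreover have "(r, w) \<notin> F" for w
  proof
    assume rw: "(r, w) \<in> F"
    then have "w \<in> C"
      using r(1) weak_rel_arc[OF rw] weak_rel_trans unfolding C_def by blast
    then have "w \<in> {u. (r, u) \<in> F \<inter> C \<times> C}" using rw r(1) by simp
    moreover have "finite {u. (r, u) \<in> F \<inter> C \<times> C}"
      by (rule finite_subset[of _ "{0..<n}"]) (use in_forest_subset[OF F] in auto)
    ultimately show False using r(2) unfolding outdeg_def by (metis card_0_eq empty_iff)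
  qed
  moreover have "(r, v) \<in> weak_rel C (F \<inter> C \<times> C)"
    using tree r(1) \<open>v \<in> C\<close> unfolding converging_tree_def by blast
  ultimately show ?thesis by blast
qed

lemma in_forest_imp_forest_fun:
  assumes F: "in_forest n W F" and noloop: "\<forall>i<n. W i i = 0"
  shows "forest_fun n W (arc_fun n F)" "fun_arcs n (arc_fun n F) = F"
proof -
  let ?c = "arc_fun n F"
  note arc_iff = in_forest_arc_iff[OF F noloop]
  show "fun_arcs n ?c = F"
    using arc_iff by (auto simp: fun_arcs_iff)
  have "?c \<in> {0..<n} \<rightarrow>\<^sub>E {0..<n}"
  proof (rule PiE_I)
    fix v assume "v \<in> {0..<n}"
    then show "?c v \<in> {0..<n}"
      using arc_iff[of v "?c v"] in_forest_subset[OF F] by (cases "?c v = v") auto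
  qed (simp add: arc_fun_def)
  moreover have "reaches_fixpoint ?c v" if v: "v < n" for v
  proof -
    let ?C = "weak_rel {0..<n} F `` {v}"
    obtain r where r: "r < n" "\<forall>w. (r, w) \<notin> F" and rv: "(r, v) \<in> weak_rel ?C (F \<inter> ?C \<times> ?C)"
      using in_forest_root[OF F v] by blast
    then have root: "?c r = r" using arc_fun_no_arc by blast
    obtain k where "(?c ^^ k) v = r"
      using weak_rel_reaches_fixpoint[where c = ?c, OF _ root rv] arc_iff by blast
    then show ?thesis using root unfolding reaches_fixpoint_def by metis
  qed
  moreover have "W v (?c v) > 0" if "v \<in> moved n ?c" for v
    using in_forest_arc(4)[OF F noloop, of v "?c v"] arc_iff[of v "?c v"] that
    unfolding moved_def by simp
  ultimately show "forest_fun n W ?c"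
    unfolding forest_fun_def acyclic_fun_def by blast
qed

lemma outdeg_fun_arcs_class:
  assumes c: "c \<in> {0..<n} \<rightarrow>\<^sub>E {0..<n}"
    and C: "C \<in> weak_components n (fun_arcs n c)" and u: "u \<in> C"
  shows "outdeg (fun_arcs n c \<inter> C \<times> C) u = (if c u = u then 0 else 1)"
proof -
  let ?R = "weak_rel {0..<n} (fun_arcs n c)"
  obtain x where x: "x < n" "C = ?R `` {x}"
    using C unfolding weak_components_def by (auto elim: quotientE)
  have "u < n" using u x weak_rel_closed[OF fun_arcs_subset[OF c]] by fastforce
  have "c u \<in> C" if "c u \<noteq> u"
    using u x that \<open>u < n\<close> weak_rel_trans[where u = x and v = u and w = "c u"]
      weak_rel_arc[of u "c u"] by (auto simp: fun_arcs_iff)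
  then have "{w. (u, w) \<in> fun_arcs n c \<inter> C \<times> C} = (if c u = u then {} else {c u})"
    using u \<open>u < n\<close> by (auto simp: fun_arcs_iff)
  then show ?thesis unfolding outdeg_def by simp
qed

lemma converging_tree_fun_arcs_class:
  assumes c: "c \<in> {0..<n} \<rightarrow>\<^sub>E {0..<n}" and acyclic: "acyclic_fun n c"
    and C: "C \<in> weak_components n (fun_arcs n c)"
  shows "converging_tree C (fun_arcs n c \<inter> C \<times> C)"
proof -
  let ?R = "weak_rel {0..<n} (fun_arcs n c)"
  obtain x where x: "x < n" "C = ?R `` {x}"
    using C unfolding weak_components_def by (auto elim: quotientE)
  have connected: "(u, v) \<in> weak_rel C (fun_arcs n c \<inter> C \<times> C)" if "u \<in> C" "v \<in> C" for u v
    using that weak_rel_within_class[of x u "{0..<n}" "fun_arcs n c" v] weak_rel_sym weak_rel_trans x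
    by blast
  obtain r where r: "r \<in> fixed_vertices n c" "(x, r) \<in> ?R"
    using weak_rel_fixpoint_exists[OF c acyclic x(1)] by blast
  have "r' = r" if "r' \<in> C" "outdeg (fun_arcs n c \<inter> C \<times> C) r' = 0" for r'
  proof -
    have "c r' = r'" using outdeg_fun_arcs_class[OF c C that(1)] that(2) by (auto split: if_splits)
    moreover have "(r', r) \<in> ?R" using that(1) x r(2) weak_rel_sym weak_rel_trans by blast
    ultimately show ?thesis using weak_rel_fixpoints_eq r(1) unfolding fixed_vertices_def by blast
  qed
  moreover have "r \<in> C" "outdeg (fun_arcs n c \<inter> C \<times> C) r = 0"
    using r x outdeg_fun_arcs_class[OF c C] unfolding fixed_vertices_def by auto
  ultimately have "\<exists>!r. r \<in> C \<and> outdeg (fun_arcs n c \<inter> C \<times> C) r = 0" by blast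
  moreover have "x \<in> C" using x by simp
  moreover have "\<forall>v\<in>C. outdeg (fun_arcs n c \<inter> C \<times> C) v \<in> {0, 1}"
    using outdeg_fun_arcs_class[OF c C] by simp
  ultimately show ?thesis
    unfolding converging_tree_def using connected by blast
qed

lemma forest_fun_in_forest:
  assumes "forest_fun n W c"
  shows "in_forest n W (fun_arcs n c)"
proof -
  have c: "c \<in> {0..<n} \<rightarrow>\<^sub>E {0..<n}" and "acyclic_fun n c"
    and pos: "\<And>v. v \<in> moved n c \<Longrightarrow> W v (c v) > 0"
    using assms unfolding forest_fun_def by auto
  have "fun_arcs n c \<subseteq> arcs n W"
    using c pos by (auto simp: fun_arcs_iff arcs_def moved_def)
  then show ?thesis
    unfolding in_forest_def using converging_tree_fun_arcs_class[OF c \<open>acyclic_fun n c\<close>] by blast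
qed

lemma card_weak_components_fun_arcs:
  assumes c: "c \<in> {0..<n} \<rightarrow>\<^sub>E {0..<n}" and acyclic: "acyclic_fun n c"
  shows "card (weak_components n (fun_arcs n c)) = card (fixed_vertices n c)"
proof -
  let ?R = "weak_rel {0..<n} (fun_arcs n c)"
  have "bij_betw (\<lambda>r. ?R `` {r}) (fixed_vertices n c) (weak_components n (fun_arcs n c))"
  proof (rule bij_betw_imageI)
    show "inj_on (\<lambda>r. ?R `` {r}) (fixed_vertices n c)"
    proof (rule inj_onI)
      fix r r' assume "r \<in> fixed_vertices n c" "r' \<in> fixed_vertices n c" "?R `` {r} = ?R `` {r'}"
      moreover from this(3) have "(r, r') \<in> ?R" by (metis Image_singleton_iff weak_rel_refl)
      ultimately show "r = r'" using weak_rel_fixpoints_eq unfolding fixed_vertices_def by blast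
    qed
    have "C \<in> (\<lambda>r. ?R `` {r}) ` fixed_vertices n c" if C: "C \<in> weak_components n (fun_arcs n c)" for C
    proof -
      obtain x where x: "x < n" "C = ?R `` {x}"
        using C unfolding weak_components_def by (auto elim: quotientE)
      obtain r where r: "r \<in> fixed_vertices n c" "(x, r) \<in> ?R"
        using weak_rel_fixpoint_exists[OF c acyclic x(1)] by blast
      have "?R `` {x} = ?R `` {r}"
        using r(2) weak_rel_sym weak_rel_trans by blast
      then show ?thesis using x r(1) by blast
    qed
    moreover have "(\<lambda>r. ?R `` {r}) ` fixed_vertices n c \<subseteq> weak_components n (fun_arcs n c)"
      unfolding weak_components_def fixed_vertices_def by (auto intro: quotientI)
    ultimately show "(\<lambda>r. ?R `` {r}) ` fixed_vertices n c = weak_components n (fun_arcs n c)"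
      by blast
  qed
  then show ?thesis by (simp add: bij_betw_same_card)
qed

lemma forest_funs_bij_in_forests:
  assumes noloop: "\<forall>i<n. W i i = 0"
  shows "bij_betw (fun_arcs n) {c. forest_fun n W c \<and> card (moved n c) = k}
           {F. in_forest n W F \<and> card F = k}"
proof (rule bij_betw_imageI)
  show "inj_on (fun_arcs n) {c. forest_fun n W c \<and> card (moved n c) = k}"
    by (rule inj_on_subset[OF inj_on_fun_arcs]) (auto simp: forest_fun_def)
  have "F \<in> fun_arcs n ` {c. forest_fun n W c \<and> card (moved n c) = k}"
    if F: "in_forest n W F" "card F = k" for F
  proof (rule rev_image_eqI)
    note c = in_forest_imp_forest_fun[OF F(1) noloop]
    show "F = fun_arcs n (arc_fun n F)" using c(2) by simp
    show "arc_fun n F \<in> {c. forest_fun n W c \<and> card (moved n c) = k}"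
      using c F(2) card_fun_arcs[of n "arc_fun n F"] by simp
  qed
  then show "fun_arcs n ` {c. forest_fun n W c \<and> card (moved n c) = k} =
      {F. in_forest n W F \<and> card F = k}"
    by (auto simp: card_fun_arcs intro: forest_fun_in_forest)
qed

lemma forest_fun_if_weights_nonzero:
  assumes nonneg: "\<forall>i<n. \<forall>j<n. W i j \<ge> 0" and c: "c \<in> acyclic_funs n"
    and nonzero: "\<And>v. v \<in> moved n c \<Longrightarrow> W v (c v) \<noteq> 0"
  shows "forest_fun n W c"
proof -
  have "W v (c v) > 0" if v: "v \<in> moved n c" for v
  proof -
    have "v < n" using v unfolding moved_def by simp
    moreover have "c v < n" using c \<open>v < n\<close> unfolding acyclic_funs_def by (auto simp: PiE_iff)
    ultimately have "W v (c v) \<ge> 0" using nonneg by blast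
    then show ?thesis using nonzero[OF v] by linarith
  qed
  then show ?thesis using c unfolding forest_fun_def acyclic_funs_def by blast
qed

lemma sigma_eq_sum_acyclic_funs:
  assumes nonneg: "\<forall>i<n. \<forall>j<n. W i j \<ge> 0" and noloop: "\<forall>i<n. W i i = 0"
  shows "sigma n W k =
    (\<Sum>c\<in>{c \<in> acyclic_funs n. card (moved n c) = k}. \<Prod>v\<in>moved n c. W v (c v))"
proof -
  let ?forest_funs = "{c. forest_fun n W c \<and> card (moved n c) = k}"
  have "sigma n W k = (\<Sum>c\<in>?forest_funs. sg_weight W (fun_arcs n c))"
    unfolding sigma_def
    by (rule sum.reindex_bij_betw[OF forest_funs_bij_in_forests[of n W k, OF noloop], symmetric])
  also have "\<dots> = (\<Sum>c\<in>?forest_funs. \<Prod>v\<in>moved n c. W v (c v))"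
    by (simp add: sg_weight_fun_arcs)
  also have "\<dots> = (\<Sum>c\<in>{c \<in> acyclic_funs n. card (moved n c) = k}. \<Prod>v\<in>moved n c. W v (c v))"
  proof (rule sum.mono_neutral_left)
    show "?forest_funs \<subseteq> {c \<in> acyclic_funs n. card (moved n c) = k}"
      unfolding forest_fun_def acyclic_funs_def by auto
    show "\<forall>c\<in>{c \<in> acyclic_funs n. card (moved n c) = k} - ?forest_funs.
        (\<Prod>v\<in>moved n c. W v (c v)) = 0"
    proof
      fix c assume c: "c \<in> {c \<in> acyclic_funs n. card (moved n c) = k} - ?forest_funs"
      then obtain v where "v \<in> moved n c" "W v (c v) = 0"
        using forest_fun_if_weights_nonzero[OF nonneg] by blast
      then show "(\<Prod>v\<in>moved n c. W v (c v)) = 0" by (intro prod_zero) auto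
    qed
  qed simp
  finally show ?thesis .
qed

lemma finite_in_forests: "finite {F. in_forest n W F}"
proof (rule finite_subset)
  show "{F. in_forest n W F} \<subseteq> Pow ({0..<n} \<times> {0..<n})"
    unfolding in_forest_def arcs_def by auto
qed simp

lemma in_forest_dim_le:
  assumes "in_forest n W F"
  shows "in_forest_dim n W \<le> card (weak_components n F)"
proof -
  have "finite {card (weak_components n F) |F. in_forest n W F}"
    using finite_image_set[OF finite_in_forests] .
  then show ?thesis unfolding in_forest_dim_def using assms by (auto intro: Min_le)
qed

lemma in_forest_dim_pos:
  assumes "0 < n"
  shows "0 < in_forest_dim n W"
proof -
  let ?dims = "{card (weak_components n F) |F. in_forest n W F}"
  have "restrict id {0..<n} \<in> {0..<n} \<rightarrow>\<^sub>E {0..<n}" by simp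
  moreover have "moved n (restrict id {0..<n}) = {}" unfolding moved_def by simp
  moreover have "acyclic_fun n (restrict id {0..<n})"
    unfolding acyclic_fun_def reaches_fixpoint_def by (intro allI impI exI[of _ 0]) simp
  ultimately have "forest_fun n W (restrict id {0..<n})" unfolding forest_fun_def by simp
  then have "in_forest n W (fun_arcs n (restrict id {0..<n}))" by (rule forest_fun_in_forest)
  then have "?dims \<noteq> {}" by blast
  moreover have "finite ?dims" using finite_image_set[OF finite_in_forests] .
  ultimately have "Min ?dims \<in> ?dims" by (rule Min_in[rotated])
  then obtain F where F: "in_forest n W F" "in_forest_dim n W = card (weak_components n F)"
    unfolding in_forest_dim_def by blast
  have "weak_rel {0..<n} F `` {0} \<in> weak_components n F"
    unfolding weak_components_def using assms by (intro quotientI) simp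
  moreover have "finite (weak_components n F)"
    unfolding weak_components_def quotient_def by (intro finite_UN_I) auto
  ultimately have "0 < card (weak_components n F)" by (auto simp: card_gt_0_iff)
  then show ?thesis using F(2) by simp
qed

lemma card_moved_le_forest_dim:
  assumes "forest_fun n W c"
  shows "card (moved n c) \<le> n - in_forest_dim n W"
proof -
  have c: "c \<in> {0..<n} \<rightarrow>\<^sub>E {0..<n}" "acyclic_fun n c"
    using assms unfolding forest_fun_def by auto
  have "in_forest_dim n W \<le> card (weak_components n (fun_arcs n c))"
    by (rule in_forest_dim_le[OF forest_fun_in_forest[OF assms]])
  also have "\<dots> = card (fixed_vertices n c)" by (rule card_weak_components_fun_arcs[OF c])
  finally have "in_forest_dim n W \<le> card (fixed_vertices n c)" .
  then show ?thesis using card_fixed_vertices_moved[of n c] by linarith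
qed

section \<open>The matrix-forest theorem and the adjugate\<close>

definition fun_graph_mat :: "nat \<Rightarrow> (nat \<Rightarrow> nat) \<Rightarrow> 'a :: comm_ring_1 mat" where
  "fun_graph_mat n c = mat n n (\<lambda>(v, u). of_bool (u = v) - of_bool (c v \<noteq> v \<and> u = c v))"

lemma det_fun_graph_mat_acyclic:
  assumes acyclic: "acyclic_fun n c"
  shows "det (fun_graph_mat n c) = 1"
proof -
  let ?M = "fun_graph_mat n c :: 'a mat"
  let ?term = "\<lambda>p. signof p * (\<Prod>i = 0..<n. ?M $$ (i, p i))"
  have M: "?M \<in> carrier_mat n n" by (simp add: fun_graph_mat_def)
  have "(\<Prod>i = 0..<n. ?M $$ (i, p i)) = 0" if p: "p permutes {0..<n}" "p \<noteq> id" for p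
  proof (rule ccontr)
    assume nonzero: "(\<Prod>i = 0..<n. ?M $$ (i, p i)) \<noteq> 0"
    have entry_nonzero: "?M $$ (i, p i) \<noteq> 0" if "i < n" for i
    proof
      assume "?M $$ (i, p i) = 0"
      then have "(\<Prod>i = 0..<n. ?M $$ (i, p i)) = 0" using that by (intro prod_zero) auto
      then show False using nonzero by simp
    qed
    have "p i = i \<or> (c i \<noteq> i \<and> p i = c i)" if i: "i < n" for i
      using entry_nonzero[OF i] permutes_in_image[OF p(1), of i] i
      unfolding fun_graph_mat_def by (auto split: if_splits)
    then show False using permutes_along_acyclic_fun_eq_id[OF acyclic p(1)] p(2) by blast
  qed
  then have "(\<Sum>p\<in>{p. p permutes {0..<n}} - {id}. ?term p) = 0"
    by (intro sum.neutral) auto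
  moreover have "det ?M = ?term id + (\<Sum>p\<in>{p. p permutes {0..<n}} - {id}. ?term p)"
    unfolding det_def'[OF M] by (rule sum.remove) (auto simp: finite_permutations permutes_id)
  moreover have "?term id = 1"
    by (auto simp: fun_graph_mat_def intro!: prod.neutral)
  ultimately show ?thesis by simp
qed

lemma det_fun_graph_mat_cyclic:
  fixes c :: "nat \<Rightarrow> nat"
  assumes c: "c \<in> {0..<n} \<rightarrow>\<^sub>E {0..<n}" and cyclic: "\<not> acyclic_fun n c"
  shows "det (fun_graph_mat n c :: 'a :: idom mat) = 0"
proof -
  let ?M = "fun_graph_mat n c :: 'a mat"
  define x :: "'a vec" where "x = vec n (\<lambda>v. of_bool (\<not> reaches_fixpoint c v))"
  have "x \<noteq> 0\<^sub>v n"
  proof -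
    obtain v where "v < n" "\<not> reaches_fixpoint c v" using cyclic unfolding acyclic_fun_def by blast
    then have "x $ v \<noteq> 0\<^sub>v n $ v" unfolding x_def by simp
    then show ?thesis by metis
  qed
  moreover have "?M *\<^sub>v x = 0\<^sub>v n"
  proof (rule eq_vecI)
    fix v assume "v < dim_vec (0\<^sub>v n :: 'a vec)"
    then have v: "v < n" by simp
    have "(?M *\<^sub>v x) $ v = (\<Sum>u = 0..<n. (of_bool (u = v) - of_bool (c v \<noteq> v \<and> u = c v)) * x $ u)"
      using v unfolding fun_graph_mat_def x_def by (simp add: scalar_prod_def)
    also have "\<dots> = x $ v - of_bool (c v \<noteq> v) * x $ c v"
      using v PiE_mem[OF c, of v] by (simp add: algebra_simps sum_subtractf sum.delta)
    also have "\<dots> = 0"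
      using v PiE_mem[OF c, of v] reaches_fixpoint_apply[of c v]
      unfolding x_def reaches_fixpoint_def by (cases "c v = v") (auto intro: exI[of _ 0])
    finally show "(?M *\<^sub>v x) $ v = 0\<^sub>v n $ v" using v by simp
  qed (simp add: fun_graph_mat_def)
  moreover have "x \<in> carrier_vec n" unfolding x_def by simp
  ultimately show ?thesis
    using det_0_iff_vec_prod_zero[of ?M n] by (auto simp: fun_graph_mat_def)
qed

lemma det_fun_graph_mat:
  fixes c :: "nat \<Rightarrow> nat"
  assumes "c \<in> {0..<n} \<rightarrow>\<^sub>E {0..<n}"
  shows "det (fun_graph_mat n c :: 'a :: idom mat) = of_bool (acyclic_fun n c)"
  using det_fun_graph_mat_acyclic det_fun_graph_mat_cyclic[OF assms] by auto

lemma det_expand_rows_sum: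
  fixes A :: "'a :: comm_ring_1 mat"
  assumes A: "A \<in> carrier_mat n n"
    and rows: "\<And>v u. v < n \<Longrightarrow> u < n \<Longrightarrow> A $$ (v, u) = (\<Sum>w = 0..<n. s v w * m v w u)"
  shows "det A = (\<Sum>c\<in>{0..<n} \<rightarrow>\<^sub>E {0..<n}.
    (\<Prod>v = 0..<n. s v (c v)) * det (mat n n (\<lambda>(v, u). m v (c v) u)))"
proof -
  let ?P = "{p. p permutes {0..<n}}"
  let ?C = "{0..<n} \<rightarrow>\<^sub>E {0..<n}"
  have p_range: "p i < n" if "p \<in> ?P" "i < n" for p i
    using that permutes_in_image[of p "{0..<n}" i] by auto
  have det_mat: "det (mat n n (\<lambda>(v, u). m v (c v) u)) =
      (\<Sum>p\<in>?P. signof p * (\<Prod>i = 0..<n. m i (c i) (p i)))" for c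
    by (subst det_def') (auto intro!: sum.cong prod.cong simp: p_range)
  have "det A = (\<Sum>p\<in>?P. signof p * (\<Prod>i = 0..<n. \<Sum>w = 0..<n. s i w * m i w (p i)))"
    unfolding det_def'[OF A] by (intro sum.cong refl arg_cong2[where f = "(*)"] prod.cong) (auto simp: rows p_range)
  also have "\<dots> = (\<Sum>p\<in>?P. signof p * (\<Sum>c\<in>?C. \<Prod>i = 0..<n. s i (c i) * m i (c i) (p i)))"
    by (subst prod_sum_PiE) auto
  also have "\<dots> = (\<Sum>p\<in>?P. \<Sum>c\<in>?C.
      (\<Prod>i = 0..<n. s i (c i)) * (signof p * (\<Prod>i = 0..<n. m i (c i) (p i))))"
    by (simp add: sum_distrib_left prod.distrib mult_ac)
  also have "\<dots> = (\<Sum>c\<in>?C. \<Sum>p\<in>?P.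
      (\<Prod>i = 0..<n. s i (c i)) * (signof p * (\<Prod>i = 0..<n. m i (c i) (p i))))"
    by (rule sum.swap)
  also have "\<dots> = (\<Sum>c\<in>?C. (\<Prod>v = 0..<n. s v (c v)) * det (mat n n (\<lambda>(v, u). m v (c v) u)))"
    by (simp add: det_mat sum_distrib_left)
  finally show ?thesis .
qed

lemma index_mat_diag_plus_laplacian:
  assumes v: "v < n" and u: "u < n"
  shows "(mat_diag n x + laplacian n W) $$ (v, u) =
    (\<Sum>w = 0..<n. (if w = v then x v else W v w) * (of_bool (u = v) - of_bool (w \<noteq> v \<and> u = w)))"
proof -
  have "(\<Sum>w = 0..<n. (if w = v then x v else W v w) * (of_bool (u = v) - of_bool (w \<noteq> v \<and> u = w))) =
      x v * of_bool (u = v) + (\<Sum>w\<in>{0..<n} - {v}. W v w * (of_bool (u = v) - of_bool (u = w)))"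
    using v by (subst sum.remove[of _ v]) (auto intro!: sum.cong)
  also have "\<dots> = (mat_diag n x + laplacian n W) $$ (v, u)"
  proof (cases "u = v")
    case True
    then show ?thesis using v by (simp add: mat_diag_def laplacian_def)
  next
    case False
    have "(\<Sum>w\<in>{0..<n} - {v}. W v w * (of_bool (u = v) - of_bool (u = w))) = (\<Sum>w\<in>{0..<n} - {v}. if w = u then - W v u else 0)"
      using False by (intro sum.cong) auto
    also have "\<dots> = - W v u" using False u by (simp add: sum.delta')
    finally show ?thesis using False u v by (simp add: mat_diag_def laplacian_def)
  qed
  finally show ?thesis by simp
qed

lemma prod_fixed_vertices_moved:
  "(\<Prod>v = 0..<n. if c v = v then x v else W v (c v)) =
    (\<Prod>v\<in>fixed_vertices n c. x v) * (\<Prod>v\<in>moved n c. W v (c v))"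
proof -
  have "{0..<n} \<inter> {v. c v = v} = fixed_vertices n c" "{0..<n} \<inter> - {v. c v = v} = moved n c"
    by (auto simp: fixed_vertices_def moved_def)
  then show ?thesis by (simp add: prod.If_cases)
qed

theorem det_mat_diag_plus_laplacian:
  "det (mat_diag n x + laplacian n W) =
    (\<Sum>c\<in>acyclic_funs n. (\<Prod>v\<in>fixed_vertices n c. x v) * (\<Prod>v\<in>moved n c. W v (c v)))"
proof -
  let ?C = "{0..<n} \<rightarrow>\<^sub>E {0..<n}"
  have "det (mat_diag n x + laplacian n W) = (\<Sum>c\<in>?C.
      (\<Prod>v = 0..<n. if c v = v then x v else W v (c v)) * det (fun_graph_mat n c :: real mat))"
    unfolding fun_graph_mat_def
  proof (rule det_expand_rows_sum)
    show "mat_diag n x + laplacian n W \<in> carrier_mat n n" by (simp add: laplacian_def)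
  qed (rule index_mat_diag_plus_laplacian)
  also have "\<dots> = (\<Sum>c\<in>?C. if acyclic_fun n c
      then (\<Prod>v\<in>fixed_vertices n c. x v) * (\<Prod>v\<in>moved n c. W v (c v)) else 0)"
    by (intro sum.cong refl) (simp add: det_fun_graph_mat prod_fixed_vertices_moved)
  also have "\<dots> = (\<Sum>c\<in>acyclic_funs n. (\<Prod>v\<in>fixed_vertices n c. x v) * (\<Prod>v\<in>moved n c. W v (c v)))"
    unfolding acyclic_funs_def by (simp add: sum.inter_filter[symmetric] finite_PiE)
  finally show ?thesis .
qed

lemma smult_one_mat_eq_mat_diag:
  fixes a :: "'a :: semiring_1"
  shows "a \<cdot>\<^sub>m 1\<^sub>m n = mat_diag n (\<lambda>_. a)"
  by (rule eq_matI) (auto simp: mat_diag_def)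

lemma adj_mat_index_eq_det_replace_row:
  fixes A :: "'a :: comm_ring_1 mat"
  assumes A: "A \<in> carrier_mat n n" and i: "i < n" and j: "j < n"
  shows "adj_mat A $$ (i, j) = det (mat n n (\<lambda>(v, u). if v = j then of_bool (u = i) else A $$ (v, u)))"
proof -
  define B where "B = mat n n (\<lambda>(v, u). if v = j then of_bool (u = i) else A $$ (v, u))"
  have B: "B \<in> carrier_mat n n" unfolding B_def by simp
  have "mat_delete A j i = mat_delete B j i"
    unfolding mat_delete_def B_def using A j by (intro eq_matI) auto
  then have "adj_mat A $$ (i, j) = cofactor B j i"
    unfolding adj_mat_def cofactor_def using A i j by simp
  also have "\<dots> = (\<Sum>u<n. if u = i then cofactor B j u else 0)"
    using i by (simp add: sum.delta')
  also have "\<dots> = (\<Sum>u<n. B $$ (j, u) * cofactor B j u)"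
    using j by (intro sum.cong) (auto simp: B_def)
  also have "\<dots> = det B" by (rule laplace_expansion_row[OF B j, symmetric])
  finally show ?thesis unfolding B_def .
qed

text \<open>Since \<open>e\<^sub>a = e\<^sub>b - (e\<^sub>b - e\<^sub>a)\<close>, replacing row \<open>b\<close> by \<open>e\<^sub>a\<close> amounts to giving \<open>b\<close> the
  diagonal weight 1 and the single out-arc \<open>b \<rightarrow> a\<close> of weight -1.\<close>

lemma shifted_laplacian_replace_row:
  assumes a: "a < n" and b: "b < n"
  shows "mat n n (\<lambda>(v, u). if v = b then of_bool (u = a) else (lam \<cdot>\<^sub>m 1\<^sub>m n + laplacian n W) $$ (v, u)) =
    mat_diag n (\<lambda>v. if v = b then 1 else lam) + laplacian n (W(b := \<lambda>w. - of_bool (w = a)))"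
    (is "?lhs = ?rhs")
proof (rule eq_matI)
  fix v u assume "v < dim_row ?rhs" "u < dim_col ?rhs"
  then have v: "v < n" and u: "u < n" by (simp_all add: laplacian_def)
  have "(\<Sum>w\<in>{0..<n} - {b}. - of_bool (w = a)) = - (of_bool (a \<noteq> b) :: real)"
    using a by (simp add: sum_negf sum.delta of_bool_def)
  then show "?lhs $$ (v, u) = ?rhs $$ (v, u)"
    using u v by (auto simp: laplacian_def mat_diag_def)
qed (simp_all add: laplacian_def)

lemma det_shifted_laplacian:
  "det (lam \<cdot>\<^sub>m 1\<^sub>m n + laplacian n W) =
    (\<Sum>c\<in>acyclic_funs n. (\<Prod>v\<in>moved n c. W v (c v)) * lam ^ (n - card (moved n c)))"
proof -
  have "(\<Prod>v\<in>fixed_vertices n c. lam) = lam ^ (n - card (moved n c))" for c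
  proof -
    have "card (fixed_vertices n c) = n - card (moved n c)"
      using card_fixed_vertices_moved[of n c] by arith
    then show ?thesis by simp
  qed
  then show ?thesis
    by (simp add: smult_one_mat_eq_mat_diag det_mat_diag_plus_laplacian mult.commute)
qed

lemma adj_shifted_laplacian:
  assumes a: "a < n" and b: "b < n"
  shows "adj_mat (lam \<cdot>\<^sub>m 1\<^sub>m n + laplacian n W) $$ (a, b) =
    (\<Sum>c\<in>acyclic_funs n. (\<Prod>v\<in>moved n c. (W(b := \<lambda>w. - of_bool (w = a))) v (c v)) *
       lam ^ (n - 1 - card (moved n c - {b})))"
proof -
  have "(\<Prod>v\<in>fixed_vertices n c. if v = b then 1 else lam) = lam ^ (n - 1 - card (moved n c - {b}))" for c
  proof -
    have "(\<Prod>v\<in>fixed_vertices n c. if v = b then 1 else lam) = (\<Prod>v\<in>fixed_vertices n c - {b}. lam)"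
      by (rule prod.mono_neutral_cong_right) (auto simp: fixed_vertices_def)
    moreover have "card (fixed_vertices n c - {b}) = n - 1 - card (moved n c - {b})"
      using card_fixed_vertices_moved_remove[OF b, of c] by arith
    ultimately show ?thesis by simp
  qed
  moreover have "lam \<cdot>\<^sub>m 1\<^sub>m n + laplacian n W \<in> carrier_mat n n"
    by (simp add: laplacian_def)
  ultimately show ?thesis
    by (simp add: adj_mat_index_eq_det_replace_row a b shifted_laplacian_replace_row
        det_mat_diag_plus_laplacian mult.commute)
qed

lemma sum_group_by_degree:
  fixes f :: "'b \<Rightarrow> 'a :: semiring_0" and g :: "'b \<Rightarrow> nat"
  assumes S: "finite S" and degree: "\<And>c. c \<in> S \<Longrightarrow> f c \<noteq> 0 \<Longrightarrow> g c \<le> N"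
  shows "(\<Sum>c\<in>S. f c * h (g c)) = (\<Sum>k = 0..N. (\<Sum>c\<in>{c \<in> S. g c = k}. f c) * h k)"
proof -
  let ?S = "{c \<in> S. g c \<le> N}"
  have "(\<Sum>c\<in>S. f c * h (g c)) = (\<Sum>c\<in>?S. f c * h (g c))"
  proof (rule sum.mono_neutral_right)
    show "\<forall>c\<in>S - ?S. f c * h (g c) = 0" using degree by fastforce
  qed (use S in auto)
  also have "\<dots> = (\<Sum>k = 0..N. \<Sum>c\<in>{c \<in> ?S. g c = k}. f c * h (g c))"
    by (rule sum.group[symmetric]) (use S in auto)
  also have "\<dots> = (\<Sum>k = 0..N. (\<Sum>c\<in>{c \<in> S. g c = k}. f c) * h k)"
    by (intro sum.cong refl) (auto simp: sum_distrib_right intro!: sum.cong)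
  finally show ?thesis .
qed

lemma det_shifted_laplacian_sigma:
  assumes nonneg: "\<forall>i<n. \<forall>j<n. W i j \<ge> 0" and noloop: "\<forall>i<n. W i i = 0"
  shows "det (lam \<cdot>\<^sub>m 1\<^sub>m n + laplacian n W) =
    (\<Sum>k = 0..n - in_forest_dim n W. sigma n W k * lam ^ (n - k))"
proof -
  have "card (moved n c) \<le> n - in_forest_dim n W"
    if "c \<in> acyclic_funs n" "(\<Prod>v\<in>moved n c. W v (c v)) \<noteq> 0" for c
    using that card_moved_le_forest_dim forest_fun_if_weights_nonzero[OF nonneg] by auto
  then have "det (lam \<cdot>\<^sub>m 1\<^sub>m n + laplacian n W) = (\<Sum>k = 0..n - in_forest_dim n W.
      (\<Sum>c\<in>{c \<in> acyclic_funs n. card (moved n c) = k}. \<Prod>v\<in>moved n c. W v (c v)) * lam ^ (n - k))"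
    unfolding det_shifted_laplacian
    by (intro sum_group_by_degree[where g = "\<lambda>c. card (moved n c)" and h = "\<lambda>k. lam ^ (n - k)"])
      simp_all
  then show ?thesis by (simp add: sigma_eq_sum_acyclic_funs[OF nonneg noloop])
qed

lemma adj_shifted_laplacian_coeffs:
  assumes nonneg: "\<forall>i<n. \<forall>j<n. W i j \<ge> 0" and a: "a < n" and b: "b < n"
  shows "adj_mat (lam \<cdot>\<^sub>m 1\<^sub>m n + laplacian n W) $$ (a, b) =
    (\<Sum>k = 0..n - in_forest_dim n W.
       (\<Sum>c\<in>{c \<in> acyclic_funs n. card (moved n c - {b}) = k}.
          \<Prod>v\<in>moved n c. (W(b := \<lambda>w. - of_bool (w = a))) v (c v)) * lam ^ (n - 1 - k))"
proof -
  have "card (moved n c - {b}) \<le> n - in_forest_dim n W"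
    if c: "c \<in> acyclic_funs n"
      and "(\<Prod>v\<in>moved n c. (W(b := \<lambda>w. - of_bool (w = a))) v (c v)) \<noteq> 0" for c
  proof -
    txt \<open>Making \<open>b\<close> a root turns \<open>c\<close> into an in-forest of the original graph.\<close>
    have "W v (c v) \<noteq> 0" if "v \<in> moved n c - {b}" for v
      using that \<open>(\<Prod>v\<in>moved n c. _) \<noteq> 0\<close> prod_zero[of "moved n c"] by force
    then have "forest_fun n W (c(b := b))"
      using acyclic_funs_fun_upd_self[OF c b]
      by (intro forest_fun_if_weights_nonzero[OF nonneg]) (auto simp: moved_fun_upd_self)
    then show ?thesis using card_moved_le_forest_dim moved_fun_upd_self by metis
  qed
  then show ?thesis
    unfolding adj_shifted_laplacian[OF a b]
    by (intro sum_group_by_degree[where g = "\<lambda>c. card (moved n c - {b})"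
          and h = "\<lambda>k. lam ^ (n - 1 - k)"]) simp_all
qed

section \<open>Coefficients of the adjugate of a shifted matrix\<close>

lemma reversed_polyfun_eq_0:
  fixes e :: "nat \<Rightarrow> 'a :: {idom, real_normed_div_algebra}"
  assumes zero: "\<And>x. (\<Sum>k = 0..K. e k * x ^ (M - k)) = 0" and KM: "K \<le> M" and k: "k \<le> K"
  shows "e k = 0"
proof -
  define coeff where "coeff i = (if M - K \<le> i then e (M - i) else 0)" for i
  have "(\<Sum>i\<le>M. coeff i * x ^ i) = (\<Sum>k = 0..K. e k * x ^ (M - k))" for x :: 'a
  proof -
    have "(\<Sum>i\<le>M. coeff i * x ^ i) = (\<Sum>i = M - K..M. e (M - i) * x ^ i)"
      by (rule sum.mono_neutral_cong_right) (auto simp: coeff_def)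
    also have "\<dots> = (\<Sum>k = 0..K. e k * x ^ (M - k))"
      by (rule sum.reindex_bij_witness[where i = "\<lambda>k. M - k" and j = "\<lambda>i. M - i"]) (use KM in auto)
    finally show ?thesis .
  qed
  then have "coeff (M - k) = 0" using zero polyfun_eq_0[of coeff M] by simp
  moreover have "M - K \<le> M - k" "M - (M - k) = k" using k KM by auto
  ultimately show ?thesis unfolding coeff_def by simp
qed

lemma adj_mat_shift_mult_index:
  fixes L :: "'a :: comm_ring_1 mat"
  assumes L: "L \<in> carrier_mat n n" and a: "a < n" and b: "b < n"
  shows "x * adj_mat (x \<cdot>\<^sub>m 1\<^sub>m n + L) $$ (a, b) +
      (\<Sum>u = 0..<n. adj_mat (x \<cdot>\<^sub>m 1\<^sub>m n + L) $$ (a, u) * L $$ (u, b)) =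
    det (x \<cdot>\<^sub>m 1\<^sub>m n + L) * of_bool (a = b)"
proof -
  let ?A = "x \<cdot>\<^sub>m 1\<^sub>m n + L"
  have A: "?A \<in> carrier_mat n n" using L by simp
  have "x * adj_mat ?A $$ (a, b) + (\<Sum>u = 0..<n. adj_mat ?A $$ (a, u) * L $$ (u, b)) =
      (\<Sum>u = 0..<n. (if u = b then x * adj_mat ?A $$ (a, u) else 0) + adj_mat ?A $$ (a, u) * L $$ (u, b))"
    using b by (simp add: sum.distrib sum.delta')
  also have "\<dots> = (\<Sum>u = 0..<n. adj_mat ?A $$ (a, u) * ?A $$ (u, b))"
    using L b by (intro sum.cong) (auto simp: algebra_simps)
  also have "\<dots> = (adj_mat ?A * ?A) $$ (a, b)"
    using carrier_matD[OF adj_mat(1)[OF A]] carrier_matD[OF A] a b by (simp add: scalar_prod_def)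
  also have "\<dots> = det ?A * of_bool (a = b)"
    using adj_mat(3)[OF A] a b by simp
  finally show ?thesis .
qed

lemma index_pow_mat_Suc:
  fixes L :: "'a :: semiring_1 mat"
  assumes "L \<in> carrier_mat n n" "a < n" "b < n"
  shows "(L ^\<^sub>m Suc m) $$ (a, b) = (\<Sum>u = 0..<n. (L ^\<^sub>m m) $$ (a, u) * L $$ (u, b))"
  using assms by (simp add: scalar_prod_def)

context
  fixes L :: "'a :: real_normed_field mat" and n N :: nat
    and \<sigma> :: "nat \<Rightarrow> 'a" and Q :: "nat \<Rightarrow> nat \<Rightarrow> nat \<Rightarrow> 'a"
  assumes L: "L \<in> carrier_mat n n" and N: "N < n"
    and det: "\<And>x. det (x \<cdot>\<^sub>m 1\<^sub>m n + L) = (\<Sum>k = 0..N. \<sigma> k * x ^ (n - k))"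
    and adj: "\<And>x a b. a < n \<Longrightarrow> b < n \<Longrightarrow>
      adj_mat (x \<cdot>\<^sub>m 1\<^sub>m n + L) $$ (a, b) = (\<Sum>k = 0..N. Q a b k * x ^ (n - 1 - k))"
begin

lemma adj_shifted_mult_coeffs:
  assumes a: "a < n" and b: "b < n"
  shows "(\<Sum>k = 0..N. Q a b k * x ^ (n - k)) +
      (\<Sum>k = 0..N. (\<Sum>u = 0..<n. Q a u k * L $$ (u, b)) * x ^ (n - 1 - k)) =
    (\<Sum>k = 0..N. \<sigma> k * x ^ (n - k)) * of_bool (a = b)"
proof -
  let ?adj = "adj_mat (x \<cdot>\<^sub>m 1\<^sub>m n + L)"
  have "x * (Q a b k * x ^ (n - 1 - k)) = Q a b k * x ^ (n - k)" if "k \<in> {0..N}" for k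
  proof -
    have "n - k = Suc (n - 1 - k)" using that N by auto
    then show ?thesis by (simp add: mult.left_commute)
  qed
  then have "x * ?adj $$ (a, b) = (\<Sum>k = 0..N. Q a b k * x ^ (n - k))"
    unfolding adj[OF a b] sum_distrib_left by (rule sum.cong[OF refl])
  moreover have "(\<Sum>u = 0..<n. ?adj $$ (a, u) * L $$ (u, b)) =
      (\<Sum>k = 0..N. (\<Sum>u = 0..<n. Q a u k * L $$ (u, b)) * x ^ (n - 1 - k))"
    by (simp add: adj[OF a] sum_distrib_left sum_distrib_right mult_ac sum.swap[of _ "{0..N}"])
  ultimately show ?thesis
    using adj_mat_shift_mult_index[OF L a b, of x] det by simp
qed

lemma adj_shifted_coeffs_recurrence:
  assumes a: "a < n" and b: "b < n" and k: "k \<le> N"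
  shows "Q a b k + (if k = 0 then 0 else (\<Sum>u = 0..<n. Q a u (k - 1) * L $$ (u, b))) =
    \<sigma> k * of_bool (a = b)"
proof -
  define P where "P k = (\<Sum>u = 0..<n. Q a u k * L $$ (u, b))" for k
  define e where "e k = (if k \<le> N then Q a b k - \<sigma> k * of_bool (a = b) else 0) +
    (if k = 0 then 0 else P (k - 1))" for k
  have "(\<Sum>k = 0..Suc N. e k * x ^ (n - k)) = 0" for x
  proof -
    have "(\<Sum>k = 0..Suc N. (if k = 0 then 0 else P (k - 1)) * x ^ (n - k)) =
        (\<Sum>k = 0..N. P k * x ^ (n - 1 - k))"
      by (subst sum.atLeast0_atMost_Suc_shift) simp
    moreover have "(\<Sum>k = 0..Suc N. (if k \<le> N then Q a b k - \<sigma> k * of_bool (a = b) else 0) * x ^ (n - k)) =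
        (\<Sum>k = 0..N. (Q a b k - \<sigma> k * of_bool (a = b)) * x ^ (n - k))"
      by simp
    ultimately have "(\<Sum>k = 0..Suc N. e k * x ^ (n - k)) =
        (\<Sum>k = 0..N. (Q a b k - \<sigma> k * of_bool (a = b)) * x ^ (n - k)) + (\<Sum>k = 0..N. P k * x ^ (n - 1 - k))"
      unfolding e_def distrib_right sum.distrib by simp
    also have "\<dots> = (\<Sum>k = 0..N. Q a b k * x ^ (n - k)) + (\<Sum>k = 0..N. P k * x ^ (n - 1 - k)) -
        (\<Sum>k = 0..N. \<sigma> k * x ^ (n - k)) * of_bool (a = b)"
      unfolding left_diff_distrib sum_subtractf sum_distrib_right by (simp add: mult_ac)
    finally show ?thesis using adj_shifted_mult_coeffs[OF a b, of x] unfolding P_def by simp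
  qed
  then have "e k = 0" by (rule reversed_polyfun_eq_0) (use N k in auto)
  then show ?thesis using k unfolding e_def P_def by (simp add: algebra_simps)
qed

lemma adj_shifted_coeffs_eq:
  assumes a: "a < n" and b: "b < n" and k: "k \<le> N"
  shows "Q a b k = (\<Sum>j = 0..k. \<sigma> j * ((- 1) ^ (k - j) * (L ^\<^sub>m (k - j)) $$ (a, b)))"
  using k b
proof (induction k arbitrary: b)
  case 0
  then show ?case
    using adj_shifted_coeffs_recurrence[OF a 0(2) 0(1)] L a by simp
next
  case (Suc k)
  have "(\<Sum>u = 0..<n. Q a u k * L $$ (u, b)) =
      (\<Sum>u = 0..<n. \<Sum>j = 0..k. \<sigma> j * ((- 1) ^ (k - j) * ((L ^\<^sub>m (k - j)) $$ (a, u) * L $$ (u, b))))"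
    using Suc(1,2) by (intro sum.cong) (simp_all add: sum_distrib_left sum_distrib_right mult_ac)
  also have "\<dots> = (\<Sum>j = 0..k. \<sigma> j * ((- 1) ^ (k - j) * (\<Sum>u = 0..<n. (L ^\<^sub>m (k - j)) $$ (a, u) * L $$ (u, b))))"
    by (simp add: sum.swap[of _ "{0..<n}"] sum_distrib_left)
  also have "\<dots> = (\<Sum>j = 0..k. \<sigma> j * ((- 1) ^ (k - j) * (L ^\<^sub>m Suc (k - j)) $$ (a, b)))"
    by (simp only: index_pow_mat_Suc[OF L a Suc(3)])
  also have "\<dots> = - (\<Sum>j = 0..k. \<sigma> j * ((- 1) ^ (Suc k - j) * (L ^\<^sub>m (Suc k - j)) $$ (a, b)))"
    by (simp add: sum_negf[symmetric] Suc_diff_le)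
  finally have sum_eq: "(\<Sum>u = 0..<n. Q a u k * L $$ (u, b)) =
      - (\<Sum>j = 0..k. \<sigma> j * ((- 1) ^ (Suc k - j) * (L ^\<^sub>m (Suc k - j)) $$ (a, b)))" .
  have "Q a b (Suc k) + (\<Sum>u = 0..<n. Q a u k * L $$ (u, b)) = \<sigma> (Suc k) * of_bool (a = b)"
    using adj_shifted_coeffs_recurrence[OF a Suc(3) Suc(2)] by simp
  then have "Q a b (Suc k) = \<sigma> (Suc k) * of_bool (a = b) - (\<Sum>u = 0..<n. Q a u k * L $$ (u, b))"
    by (rule eq_diff_eq[THEN iffD2])
  then have "Q a b (Suc k) = \<sigma> (Suc k) * of_bool (a = b) +
      (\<Sum>j = 0..k. \<sigma> j * ((- 1) ^ (Suc k - j) * (L ^\<^sub>m (Suc k - j)) $$ (a, b)))"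
    unfolding sum_eq by (simp only: diff_minus_eq_add)
  then show ?case using L a Suc(3) by simp
qed

lemma adj_shifted_eq_convolution:
  assumes a: "a < n" and b: "b < n"
  shows "adj_mat (x \<cdot>\<^sub>m 1\<^sub>m n + L) $$ (a, b) =
    (\<Sum>k = 0..N. (\<Sum>j = 0..k. \<sigma> j * ((- 1) ^ (k - j) * (L ^\<^sub>m (k - j)) $$ (a, b))) * x ^ (n - 1 - k))"
  unfolding adj[OF a b] using adj_shifted_coeffs_eq[OF a b] by simp

end

lemma pow_mat_smult:
  fixes A :: "'a :: comm_ring_1 mat"
  assumes A: "A \<in> carrier_mat n n"
  shows "(c \<cdot>\<^sub>m A) ^\<^sub>m k = c ^ k \<cdot>\<^sub>m A ^\<^sub>m k"
proof (induction k)
  case 0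
  then show ?case using A by (auto intro!: eq_matI)
next
  case (Suc k)
  have Ak: "A ^\<^sub>m k \<in> carrier_mat n n" using A by simp
  have "(c \<cdot>\<^sub>m A) ^\<^sub>m Suc k = (c ^ k \<cdot>\<^sub>m A ^\<^sub>m k) * (c \<cdot>\<^sub>m A)"
    using Suc by simp
  also have "\<dots> = c ^ k \<cdot>\<^sub>m (A ^\<^sub>m k * (c \<cdot>\<^sub>m A))"
    by (rule mult_smult_assoc_mat[OF Ak smult_carrier_mat[OF A]])
  also have "A ^\<^sub>m k * (c \<cdot>\<^sub>m A) = c \<cdot>\<^sub>m (A ^\<^sub>m k * A)"
    by (rule mult_smult_distrib[OF Ak A])
  finally show ?case using A by (auto intro!: eq_matI)
qed

lemma sum_triangle_swap:
  fixes N :: nat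
  shows "(\<Sum>k = 0..N. \<Sum>j = 0..k. f j (k - j)) = (\<Sum>m = 0..N. \<Sum>j = 0..N - m. f j m)"
proof -
  have "(\<Sum>k = 0..N. \<Sum>j = 0..k. f j (k - j)) = (\<Sum>(j, m)\<in>{(j, m). j + m \<le> N}. f j m)"
    by (simp add: atLeast0AtMost sum.triangle_reindex_eq)
  also have "{(j, m). j + m \<le> N} = Sigma {..N} (\<lambda>j. {m. m \<in> {..N} \<and> j + m \<le> N})" by auto
  also have "(\<Sum>(j, m)\<in>\<dots>. f j m) = (\<Sum>j\<le>N. \<Sum>m | m \<in> {..N} \<and> j + m \<le> N. f j m)"
    by (rule sum.Sigma[symmetric]) auto
  also have "\<dots> = (\<Sum>m\<le>N. \<Sum>j | j \<in> {..N} \<and> j + m \<le> N. f j m)"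
    by (rule sum.swap_restrict) auto
  also have "\<dots> = (\<Sum>m = 0..N. \<Sum>j = 0..N - m. f j m)"
    by (auto simp: atLeast0AtMost intro!: sum.cong)
  finally show ?thesis .
qed

lemma sum_s_prime_powers:
  assumes N: "N < n" and lam: "lam \<noteq> 0"
  shows "(\<Sum>m = 0..N. s_prime n W (N - m) lam * ((- 1 / lam) ^ m * B m)) =
    (\<Sum>k = 0..N. (\<Sum>j = 0..k. sigma n W j * ((- 1) ^ (k - j) * B (k - j))) * lam ^ (n - 1 - k))"
proof -
  define f where "f j m = sigma n W j * (- 1) ^ m * lam ^ (n - 1 - j - m) * B m" for j m
  have "s_prime n W (N - m) lam * ((- 1 / lam) ^ m * B m) = (\<Sum>j = 0..N - m. f j m)"
    if m: "m \<in> {0..N}" for m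
  proof -
    have "sigma n W j * lam powi (int n - int j - 1) * ((- 1 / lam) ^ m * B m) = f j m"
      if j: "j \<in> {0..N - m}" for j
    proof -
      have exponent: "int n - int j - 1 = int (n - 1 - j - m) + int m" using m j N by auto
      have "lam powi (int n - int j - 1) = lam ^ (n - 1 - j - m) * lam ^ m"
        unfolding exponent using lam by (simp add: power_int_add)
      moreover have "lam ^ m * (- 1 / lam) ^ m = (- 1) ^ m"
        using lam by (simp add: power_mult_distrib[symmetric])
      ultimately show ?thesis unfolding f_def by (simp add: mult_ac)
    qed
    then show ?thesis unfolding s_prime_def sum_distrib_right by (rule sum.cong[OF refl])
  qed
  then have "(\<Sum>m = 0..N. s_prime n W (N - m) lam * ((- 1 / lam) ^ m * B m)) =
      (\<Sum>m = 0..N. \<Sum>j = 0..N - m. f j m)"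
    by (rule sum.cong[OF refl])
  also have "\<dots> = (\<Sum>k = 0..N. \<Sum>j = 0..k. f j (k - j))"
    by (rule sum_triangle_swap[symmetric])
  also have "\<dots> = (\<Sum>k = 0..N. (\<Sum>j = 0..k. sigma n W j * ((- 1) ^ (k - j) * B (k - j))) * lam ^ (n - 1 - k))"
    unfolding f_def sum_distrib_right by (intro sum.cong refl) (simp add: mult_ac)
  finally show ?thesis .
qed

lemma adj_shifted_laplacian_index:
  fixes W :: "nat \<Rightarrow> nat \<Rightarrow> real"
  assumes n: "0 < n" and nonneg: "\<forall>i<n. \<forall>j<n. W i j \<ge> 0" and noloop: "\<forall>i<n. W i i = 0"
    and lam: "lam \<noteq> 0" and i: "i < n" and j: "j < n"
  shows "adj_mat (lam \<cdot>\<^sub>m 1\<^sub>m n + laplacian n W) $$ (i, j) =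
    (\<Sum>k = 0..n - in_forest_dim n W.
       s_prime n W (n - in_forest_dim n W - k) lam * (((- 1 / lam) \<cdot>\<^sub>m laplacian n W) ^\<^sub>m k) $$ (i, j))"
proof -
  define N where "N = n - in_forest_dim n W"
  define L where "L = laplacian n W"
  have N: "N < n" using in_forest_dim_pos[of n W] n unfolding N_def by simp
  have L: "L \<in> carrier_mat n n" unfolding L_def laplacian_def by simp
  have "adj_mat (lam \<cdot>\<^sub>m 1\<^sub>m n + L) $$ (i, j) = (\<Sum>k = 0..N.
      (\<Sum>l = 0..k. sigma n W l * ((- 1) ^ (k - l) * (L ^\<^sub>m (k - l)) $$ (i, j))) * lam ^ (n - 1 - k))"
    by (rule adj_shifted_eq_convolution[OF L N
        det_shifted_laplacian_sigma[OF nonneg noloop, folded N_def L_def] _ i j])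
      (rule adj_shifted_laplacian_coeffs[OF nonneg, folded N_def L_def])
  also have "\<dots> = (\<Sum>k = 0..N. s_prime n W (N - k) lam * ((- 1 / lam) ^ k * (L ^\<^sub>m k) $$ (i, j)))"
    by (rule sum_s_prime_powers[OF N lam, symmetric])
  also have "\<dots> = (\<Sum>k = 0..N. s_prime n W (N - k) lam * (((- 1 / lam) \<cdot>\<^sub>m L) ^\<^sub>m k) $$ (i, j))"
    using L i j by (simp add: pow_mat_smult)
  finally show ?thesis unfolding N_def L_def .
qed

theorem corollary4:
  fixes n :: nat and W :: "nat \<Rightarrow> nat \<Rightarrow> real" and lam :: real
  assumes "n > 1"
    and "\<forall>i<n. \<forall>j<n. W i j \<ge> 0"
    and "\<forall>i<n. W i i = 0"
    and "lam \<noteq> 0"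
  shows "adj_mat (lam \<cdot>\<^sub>m 1\<^sub>m n + laplacian n W) =
    mat n n (\<lambda>(i,j). \<Sum>k = 0..n - in_forest_dim n W.
       s_prime n W (n - in_forest_dim n W - k) lam *
       (((- 1 / lam) \<cdot>\<^sub>m laplacian n W) ^\<^sub>m k) $$ (i,j))"
proof -
  have n: "0 < n" using assms(1) by simp
  have "lam \<cdot>\<^sub>m 1\<^sub>m n + laplacian n W \<in> carrier_mat n n" by (simp add: laplacian_def)
  then have "adj_mat (lam \<cdot>\<^sub>m 1\<^sub>m n + laplacian n W) \<in> carrier_mat n n" by (rule adj_mat(1))
  then show ?thesis by (intro eq_matI) (auto simp: adj_shifted_laplacian_index[OF n assms(2-4)])
qed

end
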